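(* Let $\mathcal{B}$ be a $d$-dimensional manifold with a torsion-free flat connection $\nabla$ and $F\in C^\infty(\mathcal{B})$. If $F$ satisfies Condition N (weak nondegeneracy) at every point of $\mathcal{B}$, then $F$ satisfies the Rüssmann condition.
   Context: $\mathcal{K}_b=\ker dF_b$. Condition N at $b$: $X\in\mathcal{K}_b$ and $\nabla_X\nabla F=0$ at $b$ imply $X=0$. For a parallel vector field $X$ on an open set $\mathcal{O}$, $\Omega_X=dF(X)$ and $\Sigma_X=\{c\in\mathcal{O}:\Omega_X(c)=0\}$. Rüssmann condition: for every open $\mathcal{O}\subset\mathcal{B}$ and every non-vanishing parallel vector field $X$ on $\mathcal{O}$, $\Omega_X$ does not vanish identically on any nonempty open subset of $\mathcal{O}$ (equivalently $\Sigma_X$ has empty interior; in flat coordinates, the image of $\xi\mapsto(\partial F/\partial\xi_k)_k$ over an open set does not lie in a hyperplane through the origin). *)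

theory Defs
  imports "HOL-Analysis.Analysis"
begin

fun Ck_on :: "nat \<Rightarrow> 'a::euclidean_space set \<Rightarrow> ('a \<Rightarrow> real) \<Rightarrow> bool" where
  "Ck_on 0 S f = continuous_on S f"
| "Ck_on (Suc k) S f =
     (f differentiable_on S \<and> (\<forall>v. Ck_on k S (\<lambda>x. frechet_derivative f (at x) v)))"

definition smooth_on :: "'a::euclidean_space set \<Rightarrow> ('a \<Rightarrow> real) \<Rightarrow> bool" where
  "smooth_on S f \<longleftrightarrow> (\<forall>k. Ck_on k S f)"

text \<open>A d-dimensional manifold (d = CARD('n)) with a torsion-free flat connection, presented
  by an atlas of flat (affine) coordinate charts: charts phi i : U i -> real^'n with inverse psi i,
  covering the space, whose transition maps are locally affine.  The connection is the one whose
  Christoffel symbols vanish in these charts.\<close>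
definition flat_affine_atlas ::
  "'i set \<Rightarrow> ('i \<Rightarrow> 'b::topological_space set) \<Rightarrow> ('i \<Rightarrow> 'b \<Rightarrow> real^'n)
     \<Rightarrow> ('i \<Rightarrow> real^'n \<Rightarrow> 'b) \<Rightarrow> bool" where
  "flat_affine_atlas I U \<phi> \<psi> \<longleftrightarrow>
     (\<Union>i\<in>I. U i) = UNIV \<and>
     (\<forall>i\<in>I. open (U i) \<and> open (\<phi> i ` U i) \<and> homeomorphism (U i) (\<phi> i ` U i) (\<phi> i) (\<psi> i)) \<and>
     (\<forall>i\<in>I. \<forall>j\<in>I. \<forall>x\<in>U i \<inter> U j. \<exists>N A c. open N \<and> x \<in> N \<and> linear A \<and>
         (\<forall>y\<in>N \<inter> U i \<inter> U j. \<phi> j y = A (\<phi> i y) + c))"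

definition loc :: "('i \<Rightarrow> real^'n \<Rightarrow> 'b) \<Rightarrow> ('b \<Rightarrow> real) \<Rightarrow> 'i \<Rightarrow> real^'n \<Rightarrow> real" where
  "loc \<psi> F i = F \<circ> \<psi> i"

text \<open>dF_b(X) in chart i, for X given by its chart components v.\<close>
definition dF :: "('i \<Rightarrow> 'b \<Rightarrow> real^'n) \<Rightarrow> ('i \<Rightarrow> real^'n \<Rightarrow> 'b) \<Rightarrow> ('b \<Rightarrow> real)
                   \<Rightarrow> 'i \<Rightarrow> 'b \<Rightarrow> real^'n \<Rightarrow> real" where
  "dF \<phi> \<psi> F i b v = frechet_derivative (loc \<psi> F i) (at (\<phi> i b)) v"

text \<open>(nabla_X nabla F)_b applied to Y, in flat chart i (the Hessian, since Christoffel symbols vanish).\<close>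
definition hessF :: "('i \<Rightarrow> 'b \<Rightarrow> real^'n) \<Rightarrow> ('i \<Rightarrow> real^'n \<Rightarrow> 'b) \<Rightarrow> ('b \<Rightarrow> real)
                   \<Rightarrow> 'i \<Rightarrow> 'b \<Rightarrow> real^'n \<Rightarrow> real^'n \<Rightarrow> real" where
  "hessF \<phi> \<psi> F i b v w =
     frechet_derivative (\<lambda>p. frechet_derivative (loc \<psi> F i) (at p) w) (at (\<phi> i b)) v"

definition condition_N where
  "condition_N I U \<phi> \<psi> F b \<longleftrightarrow>
     (\<forall>i\<in>I. b \<in> U i \<longrightarrow>
        (\<forall>v. dF \<phi> \<psi> F i b v = 0 \<and> (\<forall>w. hessF \<phi> \<psi> F i b v w = 0) \<longrightarrow> v = 0))"

text \<open>Parallel vector field on open Ob, given by chart components X i c (c in Ob and U i):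
  components are compatible under transition differentials and locally constant in flat charts.\<close>
definition parallel_field where
  "parallel_field I U \<phi> \<psi> Ob X \<longleftrightarrow>
     (\<forall>i\<in>I. \<forall>j\<in>I. \<forall>c\<in>Ob \<inter> U i \<inter> U j.
        X j c = frechet_derivative (\<phi> j \<circ> \<psi> i) (at (\<phi> i c)) (X i c)) \<and>
     (\<forall>i\<in>I. \<forall>c\<in>Ob \<inter> U i. \<exists>N. open N \<and> c \<in> N \<and> (\<forall>c'\<in>N \<inter> Ob \<inter> U i. X i c' = X i c))"

definition nonvanishing_field where
  "nonvanishing_field I U Ob X \<longleftrightarrow> (\<forall>i\<in>I. \<forall>c\<in>Ob \<inter> U i. X i c \<noteq> 0)"

text \<open>Omega_X(c) = dF(X)(c), computed in a chart containing c; Sigma_X its zero set.\<close>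
definition Sigma_X where
  "Sigma_X I U \<phi> \<psi> F Ob X = {c\<in>Ob. \<exists>i\<in>I. c \<in> U i \<and> dF \<phi> \<psi> F i c (X i c) = 0}"

definition russmann_condition where
  "russmann_condition I U \<phi> \<psi> F \<longleftrightarrow>
     (\<forall>Ob X. open Ob \<and> parallel_field I U \<phi> \<psi> Ob X \<and> nonvanishing_field I U Ob X \<longrightarrow>
        interior (Sigma_X I U \<phi> \<psi> F Ob X) = {})"

end

theory Submission
  imports Defs
begin

text \<open>Suppose \<open>\<Omega>\<^sub>X\<close> vanished on an open set. In a flat chart around one of its points \<open>c\<^sub>0\<close>
  the parallel field \<open>X\<close> is a constant vector \<open>v \<noteq> 0\<close>, so \<open>\<partial>\<^sub>vF = 0\<close> near \<open>c\<^sub>0\<close>. Then \<open>F\<close> is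
  invariant under small translations by \<open>v\<close>, hence so is every \<open>\<partial>\<^sub>wF\<close>, and
  \<open>\<nabla>\<^sub>v\<nabla>F = 0\<close> at \<open>c\<^sub>0\<close>: Condition N forces \<open>v = 0\<close>. Because the transition maps are affine,
  \<open>\<Omega>\<^sub>X\<close> does not depend on the chart in which it is computed.\<close>

lemma has_derivative_along_line:
  fixes f :: "'a::real_normed_vector \<Rightarrow> 'b::real_normed_vector"
  assumes "f differentiable at (x + t *\<^sub>R u)"
  shows "((\<lambda>\<tau>. f (x + \<tau> *\<^sub>R u)) has_derivative
           (\<lambda>\<tau>. \<tau> *\<^sub>R frechet_derivative f (at (x + t *\<^sub>R u)) u)) (at t)"
proof -
  have line: "((\<lambda>\<tau>. x + \<tau> *\<^sub>R u) has_derivative (\<lambda>\<tau>. \<tau> *\<^sub>R u)) (at t)"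
    by (auto intro!: derivative_eq_intros)
  have Df: "(f has_derivative frechet_derivative f (at (x + t *\<^sub>R u))) (at (x + t *\<^sub>R u))"
    using assms by (simp flip: frechet_derivative_works)
  from has_derivative_compose[OF line Df] show ?thesis
    by (simp add: linear_cmul[OF has_derivative_linear[OF Df]])
qed

lemma frechet_derivative_along_line:
  fixes f :: "'a::real_normed_vector \<Rightarrow> 'b::real_normed_vector"
  assumes "f differentiable at x"
  shows "frechet_derivative (\<lambda>t. f (x + t *\<^sub>R u)) (at 0) 1 = frechet_derivative f (at x) u"
proof -
  have "((\<lambda>t. f (x + t *\<^sub>R u)) has_derivative (\<lambda>t. t *\<^sub>R frechet_derivative f (at x) u)) (at 0)"
    using has_derivative_along_line[of f x 0 u] assms by simp
  then show ?thesis
    by (simp flip: frechet_derivative_at)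
qed

lemma zero_directional_derivative_imp_translation_invariant:
  fixes f :: "'a::real_normed_vector \<Rightarrow> 'b::real_normed_vector"
  assumes "convex S" and "\<forall>y\<in>S. f differentiable at y \<and> frechet_derivative f (at y) v = 0"
    and "x \<in> S" "x + s *\<^sub>R v \<in> S"
  shows "f (x + s *\<^sub>R v) = f x"
proof -
  have on_segment: "x + t *\<^sub>R v \<in> S" if "t \<in> closed_segment 0 s" for t
  proof -
    obtain u where u: "0 \<le> u" "u \<le> 1" "t = u * s"
      using \<open>t \<in> closed_segment 0 s\<close> by (auto simp: closed_segment_def)
    have "x + t *\<^sub>R v = (1 - u) *\<^sub>R x + u *\<^sub>R (x + s *\<^sub>R v)"
      by (simp add: u(3) algebra_simps)
    then show ?thesis using assms(1,3,4) u(1,2) by (simp add: convex_def)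
  qed
  have "((\<lambda>t. f (x + t *\<^sub>R v)) has_derivative (\<lambda>_. 0)) (at t within closed_segment 0 s)"
    if "t \<in> closed_segment 0 s" for t
    using has_derivative_along_line[of f x t v] assms(2) on_segment[OF that]
    by (auto intro: has_derivative_at_withinI)
  then obtain c where "\<forall>t\<in>closed_segment 0 s. f (x + t *\<^sub>R v) = c"
    using has_derivative_zero_constant[OF convex_closed_segment] by blast
  then show ?thesis by (metis add.right_neutral ends_in_segment scale_zero_left)
qed

lemma mixed_directional_derivative_eq_0:
  fixes f :: "'a::real_normed_vector \<Rightarrow> 'b::real_normed_vector"
  assumes "open S" "p \<in> S"
    and "\<forall>y\<in>S. f differentiable at y \<and> frechet_derivative f (at y) v = 0"
    and "(\<lambda>y. frechet_derivative f (at y) w) differentiable at p"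
  shows "frechet_derivative (\<lambda>y. frechet_derivative f (at y) w) (at p) v = 0"
proof -
  obtain r where "r > 0" and ball: "ball p r \<subseteq> S"
    using assms(1,2) open_contains_ball by blast
  let ?B = "ball p r"
  have B: "\<forall>y\<in>?B. f differentiable at y \<and> frechet_derivative f (at y) v = 0"
    using assms(3) ball by blast
  have shift_invariant: "frechet_derivative f (at (p + s *\<^sub>R v)) w = frechet_derivative f (at p) w"
    if "p + s *\<^sub>R v \<in> ?B" for s
  proof -
    let ?q = "p + s *\<^sub>R v"
    define T where "T = (\<lambda>t. p + t *\<^sub>R w) -` ?B \<inter> (\<lambda>t. ?q + t *\<^sub>R w) -` ?B"
    have "(\<lambda>t. f (?q + t *\<^sub>R w)) differentiable at 0"
      using has_derivative_along_line[of f ?q 0 w] B that by (auto intro: differentiableI)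
    moreover have "open T"
      unfolding T_def by (intro open_Int open_vimage) (auto intro!: continuous_intros)
    moreover have "0 \<in> T"
      unfolding T_def using that \<open>r > 0\<close> by simp
    moreover have "f (?q + t *\<^sub>R w) = f (p + t *\<^sub>R w)" if "t \<in> T" for t
      using zero_directional_derivative_imp_translation_invariant[OF convex_ball B, of "p + t *\<^sub>R w" s]
        that unfolding T_def by (simp add: algebra_simps)
    ultimately have "frechet_derivative (\<lambda>t. f (?q + t *\<^sub>R w)) (at 0)
        = frechet_derivative (\<lambda>t. f (p + t *\<^sub>R w)) (at 0)"
      by (rule frechet_derivative_transform_within_open)
    moreover have "p \<in> ?B" using \<open>r > 0\<close> by simp
    ultimately show ?thesis
      using frechet_derivative_along_line[of f ?q w] frechet_derivative_along_line[of f p w] B that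
      by metis
  qed
  let ?g = "\<lambda>y. frechet_derivative f (at y) w"
  have "(\<lambda>s. ?g (p + s *\<^sub>R v)) differentiable at 0"
    using has_derivative_along_line[of ?g p 0 v] assms(4) by (auto intro: differentiableI)
  moreover have "open ((\<lambda>s. p + s *\<^sub>R v) -` ?B)"
    by (intro open_vimage) (auto intro!: continuous_intros)
  moreover have "0 \<in> (\<lambda>s. p + s *\<^sub>R v) -` ?B"
    using \<open>r > 0\<close> by simp
  ultimately have "frechet_derivative (\<lambda>s. ?g (p + s *\<^sub>R v)) (at 0)
      = frechet_derivative (\<lambda>s. ?g p) (at 0)"
    using shift_invariant by (intro frechet_derivative_transform_within_open) auto
  then show ?thesis
    using frechet_derivative_along_line[OF assms(4), of v] by simp
qed

lemma flat_affine_atlas_covers: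
  assumes "flat_affine_atlas I U \<phi> \<psi>"
  obtains i where "i \<in> I" "b \<in> U i"
proof -
  have "(\<Union>i\<in>I. U i) = UNIV"
    using assms unfolding flat_affine_atlas_def by (rule conjunct1)
  then show ?thesis
    using that by blast
qed

lemma flat_affine_atlas_chartD:
  assumes "flat_affine_atlas I U \<phi> \<psi>" "i \<in> I"
  shows "open (U i)" "open (\<phi> i ` U i)" "homeomorphism (U i) (\<phi> i ` U i) (\<phi> i) (\<psi> i)"
proof -
  have "\<forall>i\<in>I. open (U i) \<and> open (\<phi> i ` U i) \<and> homeomorphism (U i) (\<phi> i ` U i) (\<phi> i) (\<psi> i)"
    using assms(1) unfolding flat_affine_atlas_def by (elim conjE)
  then show "open (U i)" "open (\<phi> i ` U i)" "homeomorphism (U i) (\<phi> i ` U i) (\<phi> i) (\<psi> i)"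
    using assms(2) by blast+
qed

lemma chart_inverse:
  assumes "flat_affine_atlas I U \<phi> \<psi>" "i \<in> I" "y \<in> U i"
  shows "\<psi> i (\<phi> i y) = y"
  using homeomorphism_apply1[OF flat_affine_atlas_chartD(3)[OF assms(1,2)] assms(3)] .

lemma chart_image_open:
  assumes "flat_affine_atlas I U \<phi> \<psi>" "i \<in> I" "open V" "V \<subseteq> U i"
  shows "open (\<phi> i ` V)"
proof -
  have "openin (top_of_set (\<phi> i ` U i)) (\<phi> i ` V)"
    using homeomorphism_imp_open_map[OF flat_affine_atlas_chartD(3)[OF assms(1,2)]] assms(3,4)
    by (simp add: open_subset)
  then show ?thesis
    using openin_open_trans flat_affine_atlas_chartD(2)[OF assms(1,2)] by blast
qed

lemma smooth_on_differentiable_at: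
  assumes "smooth_on S f" "open S" "x \<in> S"
  shows "f differentiable at x" "(\<lambda>y. frechet_derivative f (at y) w) differentiable at x"
proof -
  have "Ck_on 2 S f"
    using assms(1) unfolding smooth_on_def by blast
  then have "f differentiable_on S" "(\<lambda>y. frechet_derivative f (at y) w) differentiable_on S"
    by (auto simp: numeral_2_eq_2)
  then show "f differentiable at x" "(\<lambda>y. frechet_derivative f (at y) w) differentiable at x"
    using assms(2,3) differentiable_on_eq_differentiable_at by blast+
qed

lemma transition_map_differentiable:
  assumes atlas: "flat_affine_atlas I U \<phi> \<psi>" and "i \<in> I" "j \<in> I" "c \<in> U i \<inter> U j"
  shows "(\<phi> j \<circ> \<psi> i) differentiable at (\<phi> i c)"
proof -
  obtain N A d where N: "open N" "c \<in> N" "linear A"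
    and affine: "\<forall>y\<in>N \<inter> U i \<inter> U j. \<phi> j y = A (\<phi> i y) + d"
    using atlas assms(2-4) unfolding flat_affine_atlas_def by blast
  let ?P = "\<phi> i ` (N \<inter> U i \<inter> U j)"
  have "((\<lambda>p. A p + d) has_derivative A) (at (\<phi> i c))"
    using linear_imp_has_derivative[OF N(3)] by (auto intro!: derivative_eq_intros)
  moreover have "open ?P"
    using N(1) flat_affine_atlas_chartD(1)[OF atlas] assms(2,3)
    by (intro chart_image_open[OF atlas \<open>i \<in> I\<close>]) auto
  moreover have "\<phi> i c \<in> ?P"
    using N assms(4) by blast
  moreover have "A p + d = (\<phi> j \<circ> \<psi> i) p" if "p \<in> ?P" for p
    using that affine chart_inverse[OF atlas \<open>i \<in> I\<close>] by auto
  ultimately have "((\<phi> j \<circ> \<psi> i) has_derivative A) (at (\<phi> i c))"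
    by (rule has_derivative_transform_within_open)
  then show ?thesis
    by (rule differentiableI)
qed

lemma dF_parallel_field_chart_independent:
  assumes atlas: "flat_affine_atlas I U \<phi> \<psi>"
    and smooth: "\<forall>i\<in>I. smooth_on (\<phi> i ` U i) (F \<circ> \<psi> i)"
    and parallel: "parallel_field I U \<phi> \<psi> Ob X"
    and "i \<in> I" "j \<in> I" "c \<in> Ob" "c \<in> U i" "c \<in> U j"
  shows "dF \<phi> \<psi> F i c (X i c) = dF \<phi> \<psi> F j c (X j c)"
proof -
  let ?T = "\<phi> j \<circ> \<psi> i"
  have X_j: "X j c = frechet_derivative ?T (at (\<phi> i c)) (X i c)"
    using parallel assms(4-8) unfolding parallel_field_def by blast
  have T_diff: "?T differentiable at (\<phi> i c)"
    using transition_map_differentiable[OF atlas] assms(4-8) by blast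
  have T_c: "?T (\<phi> i c) = \<phi> j c"
    using chart_inverse[OF atlas \<open>i \<in> I\<close>] \<open>c \<in> U i\<close> by simp
  have Fj_diff: "loc \<psi> F j differentiable at (?T (\<phi> i c))"
    unfolding T_c loc_def
    by (rule smooth_on_differentiable_at(1))
      (use smooth flat_affine_atlas_chartD(2)[OF atlas] assms(5,8) in auto)
  have "loc \<psi> F j \<circ> ?T differentiable at (\<phi> i c)"
    using T_diff Fj_diff by (rule differentiable_chain_at)
  moreover have "open (\<phi> i ` (U i \<inter> U j))"
    using flat_affine_atlas_chartD(1)[OF atlas] assms(4,5)
    by (intro chart_image_open[OF atlas \<open>i \<in> I\<close>]) auto
  moreover have "\<phi> i c \<in> \<phi> i ` (U i \<inter> U j)"
    using assms(7,8) by blast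
  moreover have "(loc \<psi> F j \<circ> ?T) p = loc \<psi> F i p" if "p \<in> \<phi> i ` (U i \<inter> U j)" for p
    using that chart_inverse[OF atlas] assms(4,5) by (auto simp: loc_def)
  ultimately have "frechet_derivative (loc \<psi> F i) (at (\<phi> i c))
      = frechet_derivative (loc \<psi> F j \<circ> ?T) (at (\<phi> i c))"
    by (rule frechet_derivative_transform_within_open[symmetric])
  also have "\<dots> = frechet_derivative (loc \<psi> F j) (at (\<phi> j c)) \<circ> frechet_derivative ?T (at (\<phi> i c))"
    using frechet_derivative_compose[OF T_diff Fj_diff] by (simp only: T_c)
  finally show ?thesis
    unfolding dF_def X_j by simp
qed

lemma interior_Sigma_X_imp_dF_vanishes_nearby:
  assumes atlas: "flat_affine_atlas I U \<phi> \<psi>"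
    and smooth: "\<forall>i\<in>I. smooth_on (\<phi> i ` U i) (F \<circ> \<psi> i)"
    and parallel: "parallel_field I U \<phi> \<psi> Ob X"
    and c0: "c0 \<in> interior (Sigma_X I U \<phi> \<psi> F Ob X)" and "i \<in> I" "c0 \<in> U i"
  obtains V where "open V" "c0 \<in> V" "V \<subseteq> U i" "\<forall>c\<in>V. dF \<phi> \<psi> F i c (X i c0) = 0"
proof -
  obtain W where W: "open W" "c0 \<in> W" "W \<subseteq> Sigma_X I U \<phi> \<psi> F Ob X"
    using c0 by (meson interiorE)
  then have "c0 \<in> Ob"
    unfolding Sigma_X_def by blast
  then obtain N where N: "open N" "c0 \<in> N" "\<forall>c\<in>N \<inter> Ob \<inter> U i. X i c = X i c0"
    using parallel \<open>i \<in> I\<close> \<open>c0 \<in> U i\<close> unfolding parallel_field_def by blast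
  let ?V = "W \<inter> N \<inter> U i"
  have "dF \<phi> \<psi> F i c (X i c0) = 0" if "c \<in> ?V" for c
  proof -
    obtain j where j: "j \<in> I" "c \<in> U j" "c \<in> Ob" "dF \<phi> \<psi> F j c (X j c) = 0"
      using W(3) \<open>c \<in> ?V\<close> unfolding Sigma_X_def by blast
    then have "dF \<phi> \<psi> F i c (X i c) = 0"
      using dF_parallel_field_chart_independent[OF atlas smooth parallel \<open>i \<in> I\<close>] that by auto
    then show ?thesis
      using N(3) that j(3) by auto
  qed
  moreover have "open ?V"
    using W(1) N(1) flat_affine_atlas_chartD(1)[OF atlas \<open>i \<in> I\<close>] by (intro open_Int)
  ultimately show ?thesis
    using that W(2) N(2) \<open>c0 \<in> U i\<close> by blast
qed

lemma interior_Sigma_X_imp_degenerate: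
  assumes atlas: "flat_affine_atlas I U \<phi> \<psi>"
    and smooth: "\<forall>i\<in>I. smooth_on (\<phi> i ` U i) (F \<circ> \<psi> i)"
    and parallel: "parallel_field I U \<phi> \<psi> Ob X"
    and c0: "c0 \<in> interior (Sigma_X I U \<phi> \<psi> F Ob X)" and "i \<in> I" "c0 \<in> U i"
  shows "dF \<phi> \<psi> F i c0 (X i c0) = 0" "hessF \<phi> \<psi> F i c0 (X i c0) w = 0"
proof -
  obtain V where V: "open V" "c0 \<in> V" "V \<subseteq> U i" and Omega: "\<forall>c\<in>V. dF \<phi> \<psi> F i c (X i c0) = 0"
    using interior_Sigma_X_imp_dF_vanishes_nearby[OF assms] .
  then show "dF \<phi> \<psi> F i c0 (X i c0) = 0"
    by blast
  have smooth_i: "smooth_on (\<phi> i ` U i) (loc \<psi> F i)"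
    using smooth \<open>i \<in> I\<close> unfolding loc_def by blast
  note diff = smooth_on_differentiable_at[OF smooth_i flat_affine_atlas_chartD(2)[OF atlas \<open>i \<in> I\<close>]]
  have "\<forall>p\<in>\<phi> i ` V. loc \<psi> F i differentiable at p
      \<and> frechet_derivative (loc \<psi> F i) (at p) (X i c0) = 0"
    using diff(1) Omega V(3) unfolding dF_def by blast
  moreover have "(\<lambda>p. frechet_derivative (loc \<psi> F i) (at p) w) differentiable at (\<phi> i c0)"
    using diff(2) \<open>c0 \<in> U i\<close> by blast
  ultimately show "hessF \<phi> \<psi> F i c0 (X i c0) w = 0"
    unfolding hessF_def using chart_image_open[OF atlas \<open>i \<in> I\<close> V(1,3)] V(2)
    by (intro mixed_directional_derivative_eq_0) auto
qed

theorem mainTheorem10: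
  fixes I :: "'i set" and U :: "'i \<Rightarrow> 'b::topological_space set"
    and \<phi> :: "'i \<Rightarrow> 'b \<Rightarrow> real^'n" and \<psi> :: "'i \<Rightarrow> real^'n \<Rightarrow> 'b"
    and F :: "'b \<Rightarrow> real"
  assumes "flat_affine_atlas I U \<phi> \<psi>"
    and "\<forall>i\<in>I. smooth_on (\<phi> i ` U i) (F \<circ> \<psi> i)"
    and "\<forall>b. condition_N I U \<phi> \<psi> F b"
  shows "russmann_condition I U \<phi> \<psi> F"
  unfolding russmann_condition_def
proof (intro allI impI)
  fix Ob X
  assume "open Ob \<and> parallel_field I U \<phi> \<psi> Ob X \<and> nonvanishing_field I U Ob X"
  then have parallel: "parallel_field I U \<phi> \<psi> Ob X" and nonvanishing: "nonvanishing_field I U Ob X"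
    by auto
  show "interior (Sigma_X I U \<phi> \<psi> F Ob X) = {}"
  proof (rule ccontr)
    assume "interior (Sigma_X I U \<phi> \<psi> F Ob X) \<noteq> {}"
    then obtain c0 where c0: "c0 \<in> interior (Sigma_X I U \<phi> \<psi> F Ob X)"
      by blast
    obtain i where i: "i \<in> I" "c0 \<in> U i"
      using flat_affine_atlas_covers[OF assms(1)] by blast
    have "X i c0 = 0"
      using assms(3) interior_Sigma_X_imp_degenerate[OF assms(1,2) parallel c0 i] i
      unfolding condition_N_def by blast
    moreover have "c0 \<in> Ob"
      using c0 interior_subset unfolding Sigma_X_def by blast
    ultimately show False
      using nonvanishing i unfolding nonvanishing_field_def by blast
  qed
qed

end
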